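(* Let $K$ be a number field, $a_1,a_2,e\ge 0$ integers, and let $X$ be the smooth surface of bidegree $(e,2)$ in $\mathbb{F}(0,a_1,a_2)$ cut out by $Q_{(s,t)}(\mathbf{x}) = \sum_{0\le i,j\le 2} f_{i,j}(s,t)x_ix_j$ with $f_{i,j}=f_{j,i}\in\mathcal{O}_K[s,t]$ binary forms of degree $a_i+a_j+e$ ($a_0=0$), with conic bundle $\pi:(s:t;\mathbf{x})\mapsto(s:t)$ and $\Delta(s,t) = -4\det(f_{i,j}(s,t))$, and assume $t \nmid \Delta(s,t)$. Let $p$ be a closed point of $\mathbb{P}^1_K$ with singular fibre $X_p$, with associated $\theta_p$ and $\delta_p$ as in the context. Then $\delta_p(\theta_p,1) \neq 0$, and the fibre $X_p$ is split over $K(p)$ if and only if $\delta_p(\theta_p,1)$ is a square in $K(p)$.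
   Context: Closed points $p$ with singular fibre correspond to irreducible factors $\Delta_p(s,t) \in \mathcal{O}_K[s,t]$ of $\Delta(s,t)$ (up to constants), with $\Delta_p(1,0)\neq 0$; the residue field $K(p)$ is generated over $K$ by a root $\theta_p \in \overline{K}$ of $\Delta_p(s,1)$. The plane conic $C_{(\theta_p,1)}: Q_{(\theta_p,1)}(\mathbf{x}) = 0$ over $K(p)$ is isomorphic to $X_p$ and is singular, with a unique singular point; let $i_p \in \{0,1,2\}$ be the index of the first nonzero coordinate of that point. Then $\delta_p(s,t) \in \mathcal{O}_K[s,t]$ is the discriminant of the binary quadratic form in the two remaining variables obtained by setting $x_{i_p} = 0$ in $Q_{(s,t)}(x_0,x_1,x_2)$, where the discriminant of $\alpha y^2 + \beta yz + \gamma z^2$ is $\beta^2 - 4\alpha\gamma$. A conic over a field is split if it is smooth or is a union of two lines defined over that field. $\mathbb{F}(0,a_1,a_2)$ is the $\mathbb{P}^2$-bundle $\mathbb{P}(\mathcal{O}\oplus\mathcal{O}(a_1)\oplus\mathcal{O}(a_2))$ over $\mathbb{P}^1$, with bidegree conventions so that $f_{i,j}$ has degree $a_i+a_j+e$. *)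

theory Defs
  imports "HOL-Computational_Algebra.Polynomial"
begin

definition is_subfield :: "complex set \<Rightarrow> bool" where
  "is_subfield F \<longleftrightarrow> 0 \<in> F \<and> 1 \<in> F \<and>
     (\<forall>x\<in>F. \<forall>y\<in>F. x + y \<in> F \<and> x * y \<in> F) \<and>
     (\<forall>x\<in>F. - x \<in> F) \<and> (\<forall>x\<in>F. x \<noteq> 0 \<longrightarrow> inverse x \<in> F)"

definition number_field :: "complex set \<Rightarrow> bool" where
  "number_field K \<longleftrightarrow> is_subfield K \<and>
     (\<exists>B. finite B \<and> B \<subseteq> K \<and>
        K \<subseteq> {\<Sum>b\<in>B. of_rat (q b) * b | q :: complex \<Rightarrow> rat. True})"

definition algebraic_integer :: "complex \<Rightarrow> bool" where
  "algebraic_integer x \<longleftrightarrow>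
     (\<exists>p :: int poly. lead_coeff p = 1 \<and> poly (map_poly of_int p) x = 0)"

definition ring_of_integers :: "complex set \<Rightarrow> complex set" where
  "ring_of_integers K = {x \<in> K. algebraic_integer x}"

definition gen_field :: "complex set \<Rightarrow> complex \<Rightarrow> complex set" where
  "gen_field K \<theta> = \<Inter> {F. is_subfield F \<and> K \<subseteq> F \<and> \<theta> \<in> F}"

definition bf :: "nat \<Rightarrow> (nat \<Rightarrow> complex) \<Rightarrow> complex \<Rightarrow> complex \<Rightarrow> complex" where
  "bf d c s t = (\<Sum>k\<le>d. c k * s ^ k * t ^ (d - k))"

definition bf_ds :: "nat \<Rightarrow> (nat \<Rightarrow> complex) \<Rightarrow> complex \<Rightarrow> complex \<Rightarrow> complex" where
  "bf_ds d c s t = (\<Sum>k\<le>d. of_nat k * c k * s ^ (k - 1) * t ^ (d - k))"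

definition bf_dt :: "nat \<Rightarrow> (nat \<Rightarrow> complex) \<Rightarrow> complex \<Rightarrow> complex \<Rightarrow> complex" where
  "bf_dt d c s t = (\<Sum>k\<le>d. of_nat (d - k) * c k * s ^ k * t ^ (d - k - 1))"

definition aidx :: "nat \<Rightarrow> nat \<Rightarrow> nat \<Rightarrow> nat" where
  "aidx a1 a2 i = (if i = 0 then 0 else if i = 1 then a1 else a2)"

definition wdeg :: "nat \<Rightarrow> nat \<Rightarrow> nat \<Rightarrow> nat \<Rightarrow> nat \<Rightarrow> nat" where
  "wdeg a1 a2 e i j = aidx a1 a2 i + aidx a1 a2 j + e"

text \<open>\<open>c i j k\<close> is the coefficient of \<open>s^k t^(deg - k)\<close> in \<open>f_{i,j}\<close>.\<close>
definition fij :: "nat \<Rightarrow> nat \<Rightarrow> nat \<Rightarrow> (nat \<Rightarrow> nat \<Rightarrow> nat \<Rightarrow> complex)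
    \<Rightarrow> nat \<Rightarrow> nat \<Rightarrow> complex \<Rightarrow> complex \<Rightarrow> complex" where
  "fij a1 a2 e c i j s t = bf (wdeg a1 a2 e i j) (c i j) s t"

definition Qform :: "nat \<Rightarrow> nat \<Rightarrow> nat \<Rightarrow> (nat \<Rightarrow> nat \<Rightarrow> nat \<Rightarrow> complex)
    \<Rightarrow> complex \<Rightarrow> complex \<Rightarrow> (nat \<Rightarrow> complex) \<Rightarrow> complex" where
  "Qform a1 a2 e c s t x = (\<Sum>i<3. \<Sum>j<3. fij a1 a2 e c i j s t * x i * x j)"

definition Q_ds :: "nat \<Rightarrow> nat \<Rightarrow> nat \<Rightarrow> (nat \<Rightarrow> nat \<Rightarrow> nat \<Rightarrow> complex)
    \<Rightarrow> complex \<Rightarrow> complex \<Rightarrow> (nat \<Rightarrow> complex) \<Rightarrow> complex" where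
  "Q_ds a1 a2 e c s t x =
     (\<Sum>i<3. \<Sum>j<3. bf_ds (wdeg a1 a2 e i j) (c i j) s t * x i * x j)"

definition Q_dt :: "nat \<Rightarrow> nat \<Rightarrow> nat \<Rightarrow> (nat \<Rightarrow> nat \<Rightarrow> nat \<Rightarrow> complex)
    \<Rightarrow> complex \<Rightarrow> complex \<Rightarrow> (nat \<Rightarrow> complex) \<Rightarrow> complex" where
  "Q_dt a1 a2 e c s t x =
     (\<Sum>i<3. \<Sum>j<3. bf_dt (wdeg a1 a2 e i j) (c i j) s t * x i * x j)"

definition Q_dx :: "nat \<Rightarrow> nat \<Rightarrow> nat \<Rightarrow> (nat \<Rightarrow> nat \<Rightarrow> nat \<Rightarrow> complex)
    \<Rightarrow> complex \<Rightarrow> complex \<Rightarrow> (nat \<Rightarrow> complex) \<Rightarrow> nat \<Rightarrow> complex" where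
  "Q_dx a1 a2 e c s t x m =
     (\<Sum>j<3. (fij a1 a2 e c m j s t + fij a1 a2 e c j m s t) * x j)"

text \<open>Smoothness of \<open>X\<close> (Jacobian criterion at every geometric point
  \<open>(s:t; x)\<close>, \<open>(s,t) \<noteq> 0\<close>, \<open>x \<noteq> 0\<close>, of the projective bundle).\<close>
definition smooth_X :: "nat \<Rightarrow> nat \<Rightarrow> nat \<Rightarrow> (nat \<Rightarrow> nat \<Rightarrow> nat \<Rightarrow> complex) \<Rightarrow> bool" where
  "smooth_X a1 a2 e c \<longleftrightarrow>
     (\<forall>s t x. (s, t) \<noteq> (0, 0) \<and> (\<exists>i<3. x i \<noteq> 0) \<and> Qform a1 a2 e c s t x = 0 \<and>
        (\<forall>m<3. Q_dx a1 a2 e c s t x m = 0)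
        \<longrightarrow> Q_ds a1 a2 e c s t x \<noteq> 0 \<or> Q_dt a1 a2 e c s t x \<noteq> 0)"

definition det3 :: "(nat \<Rightarrow> nat \<Rightarrow> complex) \<Rightarrow> complex" where
  "det3 M = M 0 0 * (M 1 1 * M 2 2 - M 1 2 * M 2 1)
          - M 0 1 * (M 1 0 * M 2 2 - M 1 2 * M 2 0)
          + M 0 2 * (M 1 0 * M 2 1 - M 1 1 * M 2 0)"

definition Delta :: "nat \<Rightarrow> nat \<Rightarrow> nat \<Rightarrow> (nat \<Rightarrow> nat \<Rightarrow> nat \<Rightarrow> complex)
    \<Rightarrow> complex \<Rightarrow> complex \<Rightarrow> complex" where
  "Delta a1 a2 e c s t = - 4 * det3 (\<lambda>i j. fij a1 a2 e c i j s t)"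

definition conic_val :: "(nat \<Rightarrow> nat \<Rightarrow> complex) \<Rightarrow> (nat \<Rightarrow> complex) \<Rightarrow> complex" where
  "conic_val C x = (\<Sum>i<3. \<Sum>j<3. C i j * x i * x j)"

definition conic_sing_pt :: "(nat \<Rightarrow> nat \<Rightarrow> complex) \<Rightarrow> (nat \<Rightarrow> complex) \<Rightarrow> bool" where
  "conic_sing_pt C x \<longleftrightarrow> (\<exists>i<3. x i \<noteq> 0) \<and> conic_val C x = 0 \<and>
     (\<forall>i<3. (\<Sum>j<3. (C i j + C j i) * x j) = 0)"

definition conic_smooth :: "(nat \<Rightarrow> nat \<Rightarrow> complex) \<Rightarrow> bool" where
  "conic_smooth C \<longleftrightarrow> \<not> (\<exists>x. conic_sing_pt C x)"

text \<open>A conic is split over \<open>L\<close> if it is smooth, or is a union of two lines defined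
  over \<open>L\<close> (i.e. its equation factors into two linear forms with coefficients in \<open>L\<close>).\<close>
definition conic_split :: "complex set \<Rightarrow> (nat \<Rightarrow> nat \<Rightarrow> complex) \<Rightarrow> bool" where
  "conic_split L C \<longleftrightarrow> conic_smooth C \<or>
     (\<exists>u v. (\<forall>i<3. u i \<in> L \<and> v i \<in> L) \<and> (\<exists>i<3. u i \<noteq> 0) \<and> (\<exists>i<3. v i \<noteq> 0) \<and>
        (\<forall>x. conic_val C x = (\<Sum>i<3. u i * x i) * (\<Sum>i<3. v i * x i)))"

definition sing_index :: "(nat \<Rightarrow> nat \<Rightarrow> complex) \<Rightarrow> nat" where
  "sing_index C = (LEAST i. \<exists>x. conic_sing_pt C x \<and> x i \<noteq> 0 \<and> (\<forall>j<i. x j = 0))"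

definition other_idx :: "nat \<Rightarrow> nat \<times> nat" where
  "other_idx i = (if i = 0 then (1, 2) else if i = 1 then (0, 2) else (0, 1))"

text \<open>Discriminant \<open>\<beta>^2 - 4\<alpha>\<gamma>\<close> of the binary quadratic form obtained by setting
  \<open>x_i = 0\<close> in \<open>\<Sum> F j k x_j x_k\<close>.\<close>
definition disc_restr :: "(nat \<Rightarrow> nat \<Rightarrow> complex) \<Rightarrow> nat \<Rightarrow> complex" where
  "disc_restr F i = (let (j, k) = other_idx i in
     (F j k + F k j) ^ 2 - 4 * F j j * F k k)"

definition fibre_conic :: "nat \<Rightarrow> nat \<Rightarrow> nat \<Rightarrow> (nat \<Rightarrow> nat \<Rightarrow> nat \<Rightarrow> complex)
    \<Rightarrow> complex \<Rightarrow> nat \<Rightarrow> nat \<Rightarrow> complex" where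
  "fibre_conic a1 a2 e c \<theta> = (\<lambda>i j. fij a1 a2 e c i j \<theta> 1)"

definition delta_p_at :: "nat \<Rightarrow> nat \<Rightarrow> nat \<Rightarrow> (nat \<Rightarrow> nat \<Rightarrow> nat \<Rightarrow> complex)
    \<Rightarrow> complex \<Rightarrow> complex" where
  "delta_p_at a1 a2 e c \<theta> =
     disc_restr (\<lambda>i j. fij a1 a2 e c i j \<theta> 1) (sing_index (fibre_conic a1 a2 e c \<theta>))"

end

theory Submission
  imports Defs "HOL-Analysis.Determinants"
begin

text \<open>Since \<open>\<Delta>(\<theta>,1) = 0\<close>, the symmetric matrix \<open>M = (f\<^sub>i\<^sub>j(\<theta>,1))\<close> of the fibre conic has a
  nonzero kernel, i.e. the conic is singular. At a singular point \<open>x\<close>, smoothness of \<open>X\<close> and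
  Euler's identity force \<open>\<partial>Q/\<partial>s(x) \<noteq> 0\<close>; as a quadratic form on a plane over \<open>\<complex>\<close> always has an
  isotropic vector, the kernel of \<open>M\<close> is therefore a line, spanned by some \<open>P\<close> with \<open>P\<^sub>i = 1\<close>
  for \<open>i = i\<^sub>p\<close>. Substituting \<open>U = x\<^sub>j - P\<^sub>j x\<^sub>i\<close>, \<open>V = x\<^sub>k - P\<^sub>k x\<^sub>i\<close> turns the conic into the binary form
  \<open>f\<^sub>j\<^sub>j U\<^sup>2 + 2 f\<^sub>j\<^sub>k U V + f\<^sub>k\<^sub>k V\<^sup>2\<close>, whose discriminant is \<open>\<delta>\<^sub>p(\<theta>,1)\<close>. This discriminant is nonzero,
  since otherwise the \<open>(j,k)\<close>-minor would yield a second, independent kernel vector with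
  \<open>x\<^sub>i = 0\<close>; and a binary quadratic form over a field factors into linear forms over that field
  exactly when its discriminant is a square there.\<close>

lemma sum_lessThan_3: "(\<Sum>i<(3::nat). f i) = f 0 + f 1 + (f 2 :: 'a::comm_monoid_add)"
  by (simp add: numeral_3_eq_3 numeral_2_eq_2 add.assoc)

definition perm3 :: "nat \<Rightarrow> nat \<Rightarrow> nat \<Rightarrow> bool" where
  "perm3 i j k \<longleftrightarrow> distinct [i, j, k] \<and> {i, j, k} = {..<3}"

lemma lessThan_3_eq: "{..<3::nat} = {0, 1, 2}"
  by auto

lemma perm3_other_idx:
  assumes "i < 3" "other_idx i = (j, k)" shows "perm3 i j k"
proof -
  have "i = 0 \<or> i = 1 \<or> i = 2" using assms(1) by auto
  then show ?thesis
    using assms(2) unfolding perm3_def other_idx_def lessThan_3_eq by auto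
qed

lemma perm3_less:
  assumes "perm3 i j k" shows "i < 3" "j < 3" "k < 3"
  using assms unfolding perm3_def by blast+

lemma perm3_cases:
  assumes "perm3 i j k" "r < 3" shows "r = i \<or> r = j \<or> r = k"
  using assms unfolding perm3_def by auto

lemma sum_perm3:
  assumes "perm3 i j k" shows "(\<Sum>l<3. f l) = f i + f j + (f k :: 'a::comm_monoid_add)"
proof -
  have "{..<3} = {i, j, k}" "distinct [i, j, k]" using assms unfolding perm3_def by simp_all
  then show ?thesis by (simp add: add.assoc)
qed

lemma sum_perm3_restrict:
  assumes "perm3 i j k"
  shows "(\<Sum>l<3. (if l = j then a else if l = k then b else c) * x l) = c * x i + a * x j + b * x k"
  using assms by (simp add: sum_perm3[OF assms] perm3_def)

lemma is_subfield_Inter: "(\<And>F. F \<in> \<F> \<Longrightarrow> is_subfield F) \<Longrightarrow> is_subfield (\<Inter>\<F>)"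
  unfolding is_subfield_def by blast

lemma gen_field_is_subfield: "is_subfield (gen_field K \<theta>)"
  unfolding gen_field_def by (rule is_subfield_Inter) blast

lemma gen_field_superset: "K \<subseteq> gen_field K \<theta>"
  and gen_field_generator: "\<theta> \<in> gen_field K \<theta>"
  unfolding gen_field_def by blast+

context
  fixes F :: "complex set"
  assumes F: "is_subfield F"
begin

lemma subfield_0: "0 \<in> F" and subfield_1: "1 \<in> F"
  using F unfolding is_subfield_def by auto

lemma subfield_add: "x \<in> F \<Longrightarrow> y \<in> F \<Longrightarrow> x + y \<in> F"
  and subfield_mult: "x \<in> F \<Longrightarrow> y \<in> F \<Longrightarrow> x * y \<in> F"
  and subfield_uminus: "x \<in> F \<Longrightarrow> - x \<in> F"
  using F unfolding is_subfield_def by auto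

lemma subfield_diff: "x \<in> F \<Longrightarrow> y \<in> F \<Longrightarrow> x - y \<in> F"
  using subfield_add[of x "- y"] subfield_uminus[of y] by simp

lemma subfield_divide: "x \<in> F \<Longrightarrow> y \<in> F \<Longrightarrow> x / y \<in> F"
  using F subfield_0 subfield_mult[of x "inverse y"] unfolding is_subfield_def
  by (cases "y = 0") (auto simp: divide_inverse)

lemma subfield_power: "x \<in> F \<Longrightarrow> x ^ n \<in> F"
  by (induction n) (auto intro: subfield_1 subfield_mult)

lemma subfield_sum: "(\<And>k. k \<in> A \<Longrightarrow> f k \<in> F) \<Longrightarrow> sum f A \<in> F"
  by (induction A rule: infinite_finite_induct) (auto intro: subfield_0 subfield_add)

lemma subfield_numeral: "numeral n \<in> F"
proof -
  have "of_nat m \<in> F" for m by (induction m) (auto intro: subfield_0 subfield_1 subfield_add)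
  from this[of "numeral n"] show ?thesis by simp
qed

end

lemmas subfield_intros =
  subfield_0 subfield_1 subfield_add subfield_mult subfield_uminus subfield_diff subfield_divide
  subfield_numeral

lemma bf_euler: "s * bf_ds d c s t + t * bf_dt d c s t = of_nat d * bf d c s t"
proof -
  have "s * (of_nat k * c k * s ^ (k - 1) * t ^ (d - k))
          + t * (of_nat (d - k) * c k * s ^ k * t ^ (d - k - 1))
        = of_nat d * (c k * s ^ k * t ^ (d - k))" if "k \<le> d" for k
  proof -
    have s: "of_nat k * (s * s ^ (k - 1)) = (of_nat k * s ^ k :: complex)"
      by (cases k) auto
    have t: "of_nat (d - k) * (t * t ^ (d - k - 1)) = (of_nat (d - k) * t ^ (d - k) :: complex)"
      by (cases "d - k") auto
    have "s * (of_nat k * c k * s ^ (k - 1) * t ^ (d - k))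
            + t * (of_nat (d - k) * c k * s ^ k * t ^ (d - k - 1))
          = c k * t ^ (d - k) * (of_nat k * (s * s ^ (k - 1)))
            + c k * s ^ k * (of_nat (d - k) * (t * t ^ (d - k - 1)))"
      by (simp only: ac_simps)
    also have "\<dots> = (of_nat k + of_nat (d - k)) * (c k * s ^ k * t ^ (d - k))"
      unfolding s t by (simp only: algebra_simps)
    also have "\<dots> = of_nat d * (c k * s ^ k * t ^ (d - k))"
      using that by (simp flip: of_nat_add)
    finally show ?thesis .
  qed
  then show ?thesis
    unfolding bf_ds_def bf_dt_def bf_def
    by (simp add: sum_distrib_left flip: sum.distrib)
qed

definition in_kernel3 :: "(nat \<Rightarrow> nat \<Rightarrow> complex) \<Rightarrow> (nat \<Rightarrow> complex) \<Rightarrow> bool" where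
  "in_kernel3 M x \<longleftrightarrow> (\<forall>r<3. (\<Sum>s<3. M r s * x s) = 0)"

lemma det3_eq_0_imp_kernel:
  assumes "det3 M = 0"
  obtains x where "\<exists>i<3. x i \<noteq> 0" "in_kernel3 M x"
proof -
  \<comment> \<open>The numeral type \<open>3\<close> is enumerated as \<open>1, 2, 3\<close> (cf. \<open>det_3\<close>), shifted against \<open>0, 1, 2\<close>.\<close>
  define idx :: "3 \<Rightarrow> nat" where "idx r = (if r = 1 then 0 else if r = 2 then 1 else 2)" for r
  define A :: "complex^3^3" where "A = (\<chi> r s. M (idx r) (idx s))"
  have "det A = det3 M"
    unfolding det_3 det3_def A_def idx_def by (simp add: algebra_simps)
  then have "\<not> invertible A"
    using assms invertible_det_nz by auto
  then obtain y where y: "y \<noteq> 0" "A *v y = 0"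
    by (meson invertible_left_inverse matrix_left_invertible_ker)
  define x where "x (l::nat) = (if l = 0 then y $ 1 else if l = 1 then y $ 2 else y $ 3)" for l
  have "y $ 1 \<noteq> 0 \<or> y $ 2 \<noteq> 0 \<or> y $ 3 \<noteq> 0"
    using y(1) unfolding vec_eq_iff forall_3 by simp
  then have "x 0 \<noteq> 0 \<or> x 1 \<noteq> 0 \<or> x 2 \<noteq> 0"
    unfolding x_def by simp
  then have "\<exists>i<3. x i \<noteq> 0" by force
  moreover have "in_kernel3 M x"
    unfolding in_kernel3_def
  proof (intro allI impI)
    fix r :: nat assume "r < 3"
    then have "r = 0 \<or> r = 1 \<or> r = 2" by auto
    moreover have "(\<Sum>s\<in>UNIV. A $ r' $ s * y $ s) = 0" for r'
      using y(2) unfolding vec_eq_iff matrix_vector_mult_def by simp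
    note rows = this[of 1] this[of 2] this[of 3]
    ultimately show "(\<Sum>s<3. M r s * x s) = 0"
      using rows unfolding sum_lessThan_3 sum_3 A_def idx_def x_def by auto
  qed
  ultimately show ?thesis using that by blast
qed

lemma in_kernel3_lincomb:
  "in_kernel3 M u \<Longrightarrow> in_kernel3 M w \<Longrightarrow> in_kernel3 M (\<lambda>l. a * u l + b * w l)"
  unfolding in_kernel3_def
  by (simp add: distrib_left sum.distrib mult.left_commute[of _ a] mult.left_commute[of _ b]
      flip: sum_distrib_left)

lemma in_kernel3_scale: "in_kernel3 M x \<Longrightarrow> in_kernel3 M (\<lambda>l. a * x l)"
  using in_kernel3_lincomb[of M x x a 0] by simp

lemma conic_val_kernel: "in_kernel3 M x \<Longrightarrow> conic_val M x = 0"
proof -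
  have "conic_val M x = (\<Sum>i<3. x i * (\<Sum>j<3. M i j * x j))"
    unfolding conic_val_def by (simp add: sum_distrib_left algebra_simps)
  then show "in_kernel3 M x \<Longrightarrow> conic_val M x = 0"
    unfolding in_kernel3_def by simp
qed

lemma conic_sing_pt_iff_kernel:
  assumes "\<forall>i<3. \<forall>j<3. M i j = M j i"
  shows "conic_sing_pt M x \<longleftrightarrow> (\<exists>i<3. x i \<noteq> 0) \<and> in_kernel3 M x"
proof -
  have "(\<Sum>j<3. (M i j + M j i) * x j) = 2 * (\<Sum>j<3. M i j * x j)" if "i < 3" for i
  proof -
    have "(\<Sum>j<3. (M i j + M j i) * x j) = (\<Sum>j<3. 2 * (M i j * x j))"
      using assms that by (intro sum.cong) auto
    then show ?thesis by (simp add: sum_distrib_left)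
  qed
  then show ?thesis
    unfolding conic_sing_pt_def using conic_val_kernel unfolding in_kernel3_def by auto
qed

lemma complex_quadratic_has_root:
  fixes a b c :: complex
  assumes "a \<noteq> 0"
  obtains z where "a * z\<^sup>2 + b * z + c = 0"
proof
  define s where "s = csqrt (b\<^sup>2 - 4 * a * c)"
  have "a * ((- b + s) / (2 * a))\<^sup>2 + b * ((- b + s) / (2 * a)) + c = (s\<^sup>2 - (b\<^sup>2 - 4 * a * c)) / (4 * a)"
    using assms by (simp add: field_simps power2_eq_square)
  also have "\<dots> = 0"
    unfolding s_def by simp
  finally show "a * ((- b + s) / (2 * a))\<^sup>2 + b * ((- b + s) / (2 * a)) + c = 0" .
qed

lemma conic_val_lincomb:
  "conic_val N (\<lambda>l. t * u l + w l) =
     t\<^sup>2 * conic_val N u + t * (\<Sum>i<3. \<Sum>j<3. N i j * (u i * w j + w i * u j)) + conic_val N w"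
  unfolding conic_val_def sum_lessThan_3 by algebra

text \<open>Any two-dimensional subspace of the kernel would contain a nonzero isotropic vector of
  \<open>N\<close>, since a binary quadratic form over \<open>\<complex>\<close> has a nontrivial zero.\<close>
lemma kernel_is_line:
  assumes anisotropic: "\<forall>x. (\<exists>i<3. x i \<noteq> 0) \<and> in_kernel3 M x \<longrightarrow> conic_val N x \<noteq> 0"
    and u: "\<exists>i<3. u i \<noteq> 0" "in_kernel3 M u" and w: "in_kernel3 M w"
  obtains t where "\<forall>i<3. w i = t * u i"
proof -
  have "conic_val N u \<noteq> 0" using anisotropic u by blast
  then obtain t where t: "conic_val N u * t\<^sup>2
      + (\<Sum>i<3. \<Sum>j<3. N i j * (u i * w j + w i * u j)) * t + conic_val N w = 0"
    by (rule complex_quadratic_has_root)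
  then have "conic_val N (\<lambda>l. t * u l + w l) = 0"
    unfolding conic_val_lincomb by (simp add: algebra_simps)
  moreover have "in_kernel3 M (\<lambda>l. t * u l + w l)"
    using in_kernel3_lincomb[OF u(2) w, of t 1] by simp
  ultimately have "\<forall>i<3. t * u i + w i = 0"
    using anisotropic by auto
  then have "\<forall>i<3. w i = - t * u i"
    by (simp add: eq_neg_iff_add_eq_0 add.commute)
  then show ?thesis by (rule that)
qed

lemma weighted_conic_val_kernel:
  fixes M :: "nat \<Rightarrow> nat \<Rightarrow> complex" and a :: "nat \<Rightarrow> complex"
  assumes sym: "\<forall>i<3. \<forall>j<3. M i j = M j i" and x: "in_kernel3 M x"
  shows "(\<Sum>i<3. \<Sum>j<3. (a i + a j + b) * M i j * x i * x j) = 0"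
proof -
  have row: "(\<Sum>j<3. M i j * x j) = 0" if "i < 3" for i
    using x that unfolding in_kernel3_def by blast
  have col: "(\<Sum>i<3. M i j * x i) = 0" if "j < 3" for j
    using row[OF that] sym that by (simp add: mult.commute)
  have swap: "(\<Sum>i<3. \<Sum>j<3. a j * x j * (M i j * x i)) = (\<Sum>j<3. a j * x j * (\<Sum>i<3. M i j * x i))"
    by (subst sum.swap) (simp only: sum_distrib_left)
  have "(\<Sum>i<3. \<Sum>j<3. (a i + a j + b) * M i j * x i * x j)
      = (\<Sum>i<3. \<Sum>j<3. (a i + b) * x i * (M i j * x j) + a j * x j * (M i j * x i))"
    by (intro sum.cong refl) (simp add: algebra_simps)
  also have "\<dots> = (\<Sum>i<3. (a i + b) * x i * (\<Sum>j<3. M i j * x j))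
        + (\<Sum>i<3. \<Sum>j<3. a j * x j * (M i j * x i))"
    by (simp only: sum.distrib sum_distrib_left)
  also have "\<dots> = 0"
    unfolding swap using row col by simp
  finally show ?thesis .
qed

lemma sing_index_kernel_vector:
  assumes sym: "\<forall>i<3. \<forall>j<3. M i j = M j i" and "det3 M = 0"
  obtains P where "sing_index M < 3" "in_kernel3 M P" "P (sing_index M) = 1"
proof -
  obtain x where x: "\<exists>i<3. x i \<noteq> 0" "in_kernel3 M x"
    using det3_eq_0_imp_kernel[OF \<open>det3 M = 0\<close>] .
  obtain l where l: "l < 3" "x l \<noteq> 0"
    using x(1) by blast
  define n where "n = (LEAST l. x l \<noteq> 0)"
  have "n \<le> l"
    unfolding n_def using l(2) by (rule Least_le)
  have "x n \<noteq> 0"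
    unfolding n_def using l(2) by (rule LeastI)
  moreover have "\<forall>l<n. x l = 0"
    unfolding n_def using not_less_Least by blast
  moreover have "n < 3"
    using \<open>n \<le> l\<close> l(1) by simp
  ultimately have n: "x n \<noteq> 0" "\<forall>l<n. x l = 0" "n < 3" by blast+
  have x_sing: "conic_sing_pt M x"
    using x conic_sing_pt_iff_kernel[OF sym] by blast
  let ?i = "sing_index M"
  have "?i \<le> n"
    unfolding sing_index_def by (rule Least_le) (use n x_sing in blast)
  moreover obtain y where y: "conic_sing_pt M y" "y ?i \<noteq> 0"
    using LeastI[of "\<lambda>i. \<exists>y. conic_sing_pt M y \<and> y i \<noteq> 0 \<and> (\<forall>j<i. y j = 0)" n] n x_sing
    unfolding sing_index_def by blast
  moreover have "in_kernel3 M (\<lambda>l. inverse (y ?i) * y l)"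
    using y(1) conic_sing_pt_iff_kernel[OF sym] in_kernel3_scale by blast
  ultimately show ?thesis
    using that[of "\<lambda>l. inverse (y ?i) * y l"] n(3) by simp
qed

lemma kernel_vector_row:
  assumes "in_kernel3 M P" "P i = 1" "perm3 i j k" "r < 3"
  shows "M r i = - (M r j * P j + M r k * P k)"
proof -
  have "(\<Sum>s<3. M r s * P s) = 0"
    using assms(1,4) unfolding in_kernel3_def by blast
  then have "M r i + (M r j * P j + M r k * P k) = 0"
    unfolding sum_perm3[OF assms(3)] assms(2) by (simp add: add.assoc)
  then show ?thesis
    by (rule eq_neg_iff_add_eq_0[THEN iffD2])
qed

text \<open>Row \<open>i\<close> of \<open>M\<close> is a combination of rows \<open>j\<close> and \<open>k\<close>, so a kernel vector of the
  \<open>(j,k)\<close>-minor extends by \<open>x\<^sub>i = 0\<close> to a kernel vector of \<open>M\<close>.\<close>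
lemma minor_kernel_extends:
  assumes sym: "\<forall>i<3. \<forall>j<3. M i j = M j i"
    and P: "in_kernel3 M P" "P i = 1" and ijk: "perm3 i j k"
    and ab: "M j j * a + M j k * b = 0" "M j k * a + M k k * b = 0"
  shows "in_kernel3 M (\<lambda>l. if l = j then a else if l = k then b else 0)"
  unfolding in_kernel3_def
proof (intro allI impI)
  fix r :: nat assume "r < 3"
  have sjk: "M k j = M j k" "M i j = M j i" "M i k = M k i"
    using sym perm3_less[OF ijk] by auto
  have "M i j * a + M i k * b = M j i * a + M k i * b"
    using sjk by simp
  also have "\<dots> = - P j * (M j j * a + M j k * b) - P k * (M j k * a + M k k * b)"
    unfolding kernel_vector_row[OF P ijk perm3_less(2)[OF ijk]]
      kernel_vector_row[OF P ijk perm3_less(3)[OF ijk]] sjk(1)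
    by (simp add: algebra_simps)
  also have "\<dots> = 0"
    using ab by simp
  finally have "M i j * a + M i k * b = 0" .
  moreover have "(\<Sum>s<3. M r s * (if s = j then a else if s = k then b else 0)) = M r j * a + M r k * b"
    using sum_perm3_restrict[OF ijk, of a b 0 "M r"] by (simp add: mult.commute)
  ultimately show "(\<Sum>s<3. M r s * (if s = j then a else if s = k then b else 0)) = 0"
    using perm3_cases[OF ijk \<open>r < 3\<close>] ab sjk by auto
qed

lemma minor_disc_nonzero:
  assumes sym: "\<forall>i<3. \<forall>j<3. M i j = M j i"
    and P: "in_kernel3 M P" "P i = 1" and ijk: "perm3 i j k"
    and line: "\<And>w. in_kernel3 M w \<Longrightarrow> \<exists>t. \<forall>r<3. w r = t * P r"
  shows "(M j k + M k j)\<^sup>2 - 4 * M j j * M k k \<noteq> 0"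
proof
  assume "(M j k + M k j)\<^sup>2 - 4 * M j j * M k k = 0"
  moreover have "M k j = M j k"
    using sym perm3_less[OF ijk] by auto
  ultimately have singular: "M j j * M k k = M j k * M j k"
    by (simp add: power2_eq_square algebra_simps)
  obtain a b where ab: "a \<noteq> 0 \<or> b \<noteq> 0" "M j j * a + M j k * b = 0" "M j k * a + M k k * b = 0"
  proof (cases "M j j \<noteq> 0 \<or> M j k \<noteq> 0")
    case True
    then show ?thesis
      using that[of "M j k" "- M j j"] singular by (auto simp: algebra_simps)
  next
    case False
    then show ?thesis
      using that[of 1 0] by auto
  qed
  define w where "w l = (if l = j then a else if l = k then b else 0)" for l
  obtain t where t: "\<forall>r<3. w r = t * P r"
    using line minor_kernel_extends[OF sym P ijk ab(2,3)] unfolding w_def by blast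
  have "i \<noteq> j" "i \<noteq> k" "j \<noteq> k"
    using ijk unfolding perm3_def by auto
  then have "w i = 0" "w j = a" "w k = b"
    unfolding w_def by auto
  moreover have "w i = t * P i" "w j = t * P j" "w k = t * P k"
    using t perm3_less[OF ijk] by auto
  ultimately show False
    using ab(1) P(2) by simp
qed

lemma binary_form_coeffs_unique:
  fixes \<alpha> \<beta> \<gamma> \<alpha>' \<beta>' \<gamma>' :: "'a::comm_ring_1"
  assumes "\<forall>U V. \<alpha> * U\<^sup>2 + \<beta> * U * V + \<gamma> * V\<^sup>2 = \<alpha>' * U\<^sup>2 + \<beta>' * U * V + \<gamma>' * V\<^sup>2"
  shows "\<alpha> = \<alpha>'" "\<beta> = \<beta>'" "\<gamma> = \<gamma>'"
proof -
  show \<alpha>: "\<alpha> = \<alpha>'" and \<gamma>: "\<gamma> = \<gamma>'"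
    using assms[rule_format, of 1 0] assms[rule_format, of 0 1] by simp_all
  show "\<beta> = \<beta>'"
    using assms[rule_format, of 1 1] \<alpha> \<gamma> by simp
qed

lemma binary_form_factors_nonzero:
  fixes \<alpha> \<beta> \<gamma> :: "'a::comm_ring_1"
  assumes "\<beta>\<^sup>2 - 4 * \<alpha> * \<gamma> \<noteq> 0"
    and "\<forall>U V. \<alpha> * U\<^sup>2 + \<beta> * U * V + \<gamma> * V\<^sup>2 = (u1 * U + u2 * V) * (v1 * U + v2 * V)"
  shows "(u1 \<noteq> 0 \<or> u2 \<noteq> 0) \<and> (v1 \<noteq> 0 \<or> v2 \<noteq> 0)"
proof (rule ccontr)
  assume "\<not> ?thesis"
  then have "\<forall>U V. \<alpha> * U\<^sup>2 + \<beta> * U * V + \<gamma> * V\<^sup>2 = 0 * U\<^sup>2 + 0 * U * V + 0 * V\<^sup>2"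
    using assms(2) by auto
  then have "\<alpha> = 0" "\<beta> = 0" "\<gamma> = 0"
    by (rule binary_form_coeffs_unique)+
  then show False
    using assms(1) by simp
qed

lemma binary_form_factors_iff_disc_square:
  assumes L: "is_subfield L" and coeffs: "\<alpha> \<in> L" "\<beta> \<in> L" "\<gamma> \<in> L"
  shows "(\<exists>u1\<in>L. \<exists>u2\<in>L. \<exists>v1\<in>L. \<exists>v2\<in>L. \<forall>U V.
            \<alpha> * U\<^sup>2 + \<beta> * U * V + \<gamma> * V\<^sup>2 = (u1 * U + u2 * V) * (v1 * U + v2 * V))
         \<longleftrightarrow> (\<exists>y\<in>L. y\<^sup>2 = \<beta>\<^sup>2 - 4 * \<alpha> * \<gamma>)"
proof
  assume "\<exists>u1\<in>L. \<exists>u2\<in>L. \<exists>v1\<in>L. \<exists>v2\<in>L. \<forall>U V.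
            \<alpha> * U\<^sup>2 + \<beta> * U * V + \<gamma> * V\<^sup>2 = (u1 * U + u2 * V) * (v1 * U + v2 * V)"
  then obtain u1 u2 v1 v2 where uv: "u1 \<in> L" "u2 \<in> L" "v1 \<in> L" "v2 \<in> L"
    and fac: "\<forall>U V. \<alpha> * U\<^sup>2 + \<beta> * U * V + \<gamma> * V\<^sup>2
                = (u1 * v1) * U\<^sup>2 + (u1 * v2 + u2 * v1) * U * V + (u2 * v2) * V\<^sup>2"
    by (auto simp: algebra_simps power2_eq_square)
  have "\<beta>\<^sup>2 - 4 * \<alpha> * \<gamma> = (u1 * v2 - u2 * v1)\<^sup>2"
    unfolding binary_form_coeffs_unique[OF fac] by (simp add: algebra_simps power2_eq_square)
  moreover have "u1 * v2 - u2 * v1 \<in> L"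
    by (intro subfield_intros L uv)
  ultimately show "\<exists>y\<in>L. y\<^sup>2 = \<beta>\<^sup>2 - 4 * \<alpha> * \<gamma>"
    by metis
next
  assume "\<exists>y\<in>L. y\<^sup>2 = \<beta>\<^sup>2 - 4 * \<alpha> * \<gamma>"
  then obtain y where y: "y \<in> L" "y\<^sup>2 = \<beta>\<^sup>2 - 4 * \<alpha> * \<gamma>" by blast
  show "\<exists>u1\<in>L. \<exists>u2\<in>L. \<exists>v1\<in>L. \<exists>v2\<in>L. \<forall>U V.
            \<alpha> * U\<^sup>2 + \<beta> * U * V + \<gamma> * V\<^sup>2 = (u1 * U + u2 * V) * (v1 * U + v2 * V)"
  proof (cases "\<alpha> = 0")
    case True
    have "\<forall>U V. \<alpha> * U\<^sup>2 + \<beta> * U * V + \<gamma> * V\<^sup>2 = (0 * U + 1 * V) * (\<beta> * U + \<gamma> * V)"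
      using True by (simp add: algebra_simps power2_eq_square)
    then show ?thesis
      using coeffs subfield_0[OF L] subfield_1[OF L] by blast
  next
    case False
    have "(\<beta> - y) * (\<beta> + y) = 4 * \<alpha> * \<gamma>"
      using y(2) by (simp add: algebra_simps power2_eq_square)
    then have "\<forall>U V. \<alpha> * U\<^sup>2 + \<beta> * U * V + \<gamma> * V\<^sup>2
        = (\<alpha> * U + (\<beta> - y) / 2 * V) * (1 * U + (\<beta> + y) / (2 * \<alpha>) * V)"
      using False by (simp add: field_simps power2_eq_square)
    moreover have "(\<beta> - y) / 2 \<in> L" "(\<beta> + y) / (2 * \<alpha>) \<in> L"
      by (intro subfield_intros L coeffs y(1))+
    ultimately show ?thesis
      using coeffs subfield_1[OF L] by blast
  qed
qed

lemma conic_val_singular: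
  assumes sym: "\<forall>i<3. \<forall>j<3. M i j = M j i"
    and P: "in_kernel3 M P" "P i = 1" and ijk: "perm3 i j k"
  shows "conic_val M x = M j j * (x j - P j * x i)\<^sup>2
    + (M j k + M k j) * (x j - P j * x i) * (x k - P k * x i) + M k k * (x k - P k * x i)\<^sup>2"
proof -
  note row = kernel_vector_row[OF P ijk]
  have sjk: "M k j = M j k" "M i j = M j i" "M i k = M k i"
    using sym perm3_less[OF ijk] by auto
  have ei: "M i i = - (M j i * P j + M k i * P k)"
    using row[OF perm3_less(1)[OF ijk]] unfolding sjk(2,3) .
  have ej: "M j i = - (M j j * P j + M j k * P k)"
    using row[OF perm3_less(2)[OF ijk]] .
  have ek: "M k i = - (M j k * P j + M k k * P k)"
    using row[OF perm3_less(3)[OF ijk]] unfolding sjk(1) .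
  have "conic_val M x = (M i i * x i * x i + M i j * x i * x j + M i k * x i * x k) +
      (M j i * x j * x i + M j j * x j * x j + M j k * x j * x k) +
      (M k i * x k * x i + M k j * x k * x j + M k k * x k * x k)"
    unfolding conic_val_def sum_perm3[OF ijk] ..
  also have "\<dots> = M j j * (x j - P j * x i)\<^sup>2
    + (M j k + M k j) * (x j - P j * x i) * (x k - P k * x i) + M k k * (x k - P k * x i)\<^sup>2"
    unfolding ei sjk ej ek by (simp add: algebra_simps power2_eq_square)
  finally show ?thesis .
qed

lemma kernel_vector_in_subfield:
  assumes L: "is_subfield L" and entries: "\<forall>i<3. \<forall>j<3. M i j \<in> L"
    and sym: "\<forall>i<3. \<forall>j<3. M i j = M j i"
    and P: "in_kernel3 M P" "P i = 1" and ijk: "perm3 i j k"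
    and disc: "(M j k + M k j)\<^sup>2 - 4 * M j j * M k k \<noteq> 0"
  shows "P j \<in> L" "P k \<in> L"
proof -
  note row = kernel_vector_row[OF P ijk]
  have "M k j = M j k"
    using sym perm3_less[OF ijk] by auto
  define \<Delta> where "\<Delta> = M j j * M k k - M j k * M j k"
  have "\<Delta> \<noteq> 0"
    using disc unfolding \<Delta>_def \<open>M k j = M j k\<close> by (auto simp: algebra_simps power2_eq_square)
  moreover have "\<Delta> * P j = M k i * M j k - M j i * M k k" "\<Delta> * P k = M j i * M j k - M k i * M j j"
    unfolding \<Delta>_def row[OF perm3_less(2)[OF ijk]] row[OF perm3_less(3)[OF ijk]] \<open>M k j = M j k\<close>
    by (simp_all add: algebra_simps)
  ultimately have "P j = (M k i * M j k - M j i * M k k) / \<Delta>" "P k = (M j i * M j k - M k i * M j j) / \<Delta>"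
    by (simp_all add: field_simps)
  moreover have "M j j \<in> L" "M j k \<in> L" "M k k \<in> L" "M j i \<in> L" "M k i \<in> L"
    using entries perm3_less[OF ijk] by auto
  ultimately show "P j \<in> L" "P k \<in> L"
    unfolding \<Delta>_def by (simp_all add: subfield_intros L)
qed

lemma conic_factors_restrict:
  assumes ijk: "perm3 i j k"
    and binary: "\<And>x. conic_val M x = \<alpha> * (x j - p * x i)\<^sup>2
      + \<beta> * (x j - p * x i) * (x k - q * x i) + \<gamma> * (x k - q * x i)\<^sup>2"
    and fac: "\<forall>x. conic_val M x = (\<Sum>l<3. u l * x l) * (\<Sum>l<3. v l * x l)"
  shows "\<alpha> * U\<^sup>2 + \<beta> * U * V + \<gamma> * V\<^sup>2 = (u j * U + u k * V) * (v j * U + v k * V)"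
proof -
  have "i \<noteq> j" "i \<noteq> k" "j \<noteq> k"
    using ijk unfolding perm3_def by auto
  then show ?thesis
    using fac[rule_format, of "\<lambda>l. if l = j then U else if l = k then V else 0"]
    unfolding binary sum_perm3[OF ijk] by simp
qed

lemma conic_factors_extend:
  assumes ijk: "perm3 i j k"
    and binary: "\<And>x. conic_val M x = \<alpha> * (x j - p * x i)\<^sup>2
      + \<beta> * (x j - p * x i) * (x k - q * x i) + \<gamma> * (x k - q * x i)\<^sup>2"
    and fac: "\<forall>U V. \<alpha> * U\<^sup>2 + \<beta> * U * V + \<gamma> * V\<^sup>2 = (u1 * U + u2 * V) * (v1 * U + v2 * V)"
  shows "conic_val M x =
    (\<Sum>l<3. (if l = j then u1 else if l = k then u2 else - (u1 * p + u2 * q)) * x l) *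
    (\<Sum>l<3. (if l = j then v1 else if l = k then v2 else - (v1 * p + v2 * q)) * x l)"
proof -
  have "(\<Sum>l<3. (if l = j then u1 else if l = k then u2 else - (u1 * p + u2 * q)) * x l)
      = u1 * (x j - p * x i) + u2 * (x k - q * x i)"
    "(\<Sum>l<3. (if l = j then v1 else if l = k then v2 else - (v1 * p + v2 * q)) * x l)
      = v1 * (x j - p * x i) + v2 * (x k - q * x i)"
    unfolding sum_perm3_restrict[OF ijk] by (simp_all add: algebra_simps)
  then show ?thesis
    unfolding binary using fac by simp
qed

lemma singular_conic_split_iff:
  assumes L: "is_subfield L" and entries: "\<forall>i<3. \<forall>j<3. M i j \<in> L"
    and sym: "\<forall>i<3. \<forall>j<3. M i j = M j i"
    and P: "in_kernel3 M P" "P i = 1" "P j \<in> L" "P k \<in> L" and ijk: "perm3 i j k"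
    and disc: "(M j k + M k j)\<^sup>2 - 4 * M j j * M k k \<noteq> 0"
  shows "conic_split L M \<longleftrightarrow> (\<exists>y\<in>L. y\<^sup>2 = (M j k + M k j)\<^sup>2 - 4 * M j j * M k k)"
proof -
  define \<alpha> \<beta> \<gamma> where "\<alpha> = M j j" and "\<beta> = M j k + M k j" and "\<gamma> = M k k"
  have coeffs: "\<alpha> \<in> L" "\<beta> \<in> L" "\<gamma> \<in> L"
    using entries perm3_less[OF ijk] unfolding \<alpha>_def \<beta>_def \<gamma>_def by (auto intro: subfield_add L)
  have binary: "conic_val M x = \<alpha> * (x j - P j * x i)\<^sup>2
      + \<beta> * (x j - P j * x i) * (x k - P k * x i) + \<gamma> * (x k - P k * x i)\<^sup>2" for x
    unfolding \<alpha>_def \<beta>_def \<gamma>_def by (rule conic_val_singular[OF sym P(1,2) ijk])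
  have "conic_sing_pt M P"
    unfolding conic_sing_pt_iff_kernel[OF sym] using P(1,2) perm3_less(1)[OF ijk] by auto
  then have "conic_split L M \<longleftrightarrow>
      (\<exists>u v. (\<forall>l<3. u l \<in> L \<and> v l \<in> L) \<and> (\<exists>l<3. u l \<noteq> 0) \<and> (\<exists>l<3. v l \<noteq> 0) \<and>
        (\<forall>x. conic_val M x = (\<Sum>l<3. u l * x l) * (\<Sum>l<3. v l * x l)))"
    unfolding conic_split_def conic_smooth_def by blast
  also have "\<dots> \<longleftrightarrow> (\<exists>u1\<in>L. \<exists>u2\<in>L. \<exists>v1\<in>L. \<exists>v2\<in>L. \<forall>U V.
            \<alpha> * U\<^sup>2 + \<beta> * U * V + \<gamma> * V\<^sup>2 = (u1 * U + u2 * V) * (v1 * U + v2 * V))"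
    (is "?ternary \<longleftrightarrow> ?binary")
  proof
    assume ?ternary
    then obtain u v where "\<forall>l<3. u l \<in> L \<and> v l \<in> L"
      and "\<forall>x. conic_val M x = (\<Sum>l<3. u l * x l) * (\<Sum>l<3. v l * x l)"
      by blast
    then show ?binary
      using conic_factors_restrict[OF ijk binary] perm3_less[OF ijk] by blast
  next
    assume ?binary
    then obtain u1 u2 v1 v2 where uv: "u1 \<in> L" "u2 \<in> L" "v1 \<in> L" "v2 \<in> L"
      and fac: "\<forall>U V. \<alpha> * U\<^sup>2 + \<beta> * U * V + \<gamma> * V\<^sup>2 = (u1 * U + u2 * V) * (v1 * U + v2 * V)"
      by blast
    have nonzero: "(u1 \<noteq> 0 \<or> u2 \<noteq> 0) \<and> (v1 \<noteq> 0 \<or> v2 \<noteq> 0)"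
      using binary_form_factors_nonzero[OF _ fac] disc unfolding \<alpha>_def \<beta>_def \<gamma>_def by blast
    define u where "u l = (if l = j then u1 else if l = k then u2 else - (u1 * P j + u2 * P k))" for l
    define v where "v l = (if l = j then v1 else if l = k then v2 else - (v1 * P j + v2 * P k))" for l
    have "u j = u1" "u k = u2" "v j = v1" "v k = v2"
      unfolding u_def v_def using ijk unfolding perm3_def by auto
    then have "(\<exists>l<3. u l \<noteq> 0) \<and> (\<exists>l<3. v l \<noteq> 0)"
      using nonzero perm3_less(2,3)[OF ijk] by metis
    moreover have "\<forall>l<3. u l \<in> L \<and> v l \<in> L"
      using uv P(3,4) unfolding u_def v_def by (auto intro!: subfield_intros L)
    moreover have "\<forall>x. conic_val M x = (\<Sum>l<3. u l * x l) * (\<Sum>l<3. v l * x l)"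
      unfolding u_def v_def using conic_factors_extend[OF ijk binary fac] by blast
    ultimately show ?ternary
      by blast
  qed
  also have "\<dots> \<longleftrightarrow> (\<exists>y\<in>L. y\<^sup>2 = \<beta>\<^sup>2 - 4 * \<alpha> * \<gamma>)"
    by (rule binary_form_factors_iff_disc_square[OF L coeffs])
  finally show ?thesis
    unfolding \<alpha>_def \<beta>_def \<gamma>_def .
qed

lemma fibre_conic_symmetric:
  assumes "\<forall>i<3. \<forall>j<3. \<forall>k\<le>wdeg a1 a2 e i j. c i j k = c j i k"
  shows "\<forall>i<3. \<forall>j<3. fibre_conic a1 a2 e c \<theta> i j = fibre_conic a1 a2 e c \<theta> j i"
proof (intro allI impI)
  fix i j :: nat assume "i < 3" "j < 3"
  moreover have "wdeg a1 a2 e i j = wdeg a1 a2 e j i"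
    unfolding wdeg_def by simp
  ultimately show "fibre_conic a1 a2 e c \<theta> i j = fibre_conic a1 a2 e c \<theta> j i"
    unfolding fibre_conic_def fij_def bf_def using assms by (intro sum.cong) auto
qed

lemma fibre_conic_in_gen_field:
  assumes "\<forall>i<3. \<forall>j<3. \<forall>k\<le>wdeg a1 a2 e i j. c i j k \<in> K"
  shows "\<forall>i<3. \<forall>j<3. fibre_conic a1 a2 e c \<theta> i j \<in> gen_field K \<theta>"
proof (intro allI impI)
  fix i j :: nat assume "i < 3" "j < 3"
  note G = gen_field_is_subfield[of K \<theta>]
  have "c i j k \<in> gen_field K \<theta>" if "k \<le> wdeg a1 a2 e i j" for k
    using assms \<open>i < 3\<close> \<open>j < 3\<close> that gen_field_superset by blast
  then show "fibre_conic a1 a2 e c \<theta> i j \<in> gen_field K \<theta>"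
    unfolding fibre_conic_def fij_def bf_def
    by (intro subfield_sum[OF G] subfield_mult[OF G] subfield_power[OF G] gen_field_generator
        subfield_1[OF G]) auto
qed

lemma det3_fibre_conic: "Delta a1 a2 e c \<theta> 1 = 0 \<Longrightarrow> det3 (fibre_conic a1 a2 e c \<theta>) = 0"
  unfolding Delta_def fibre_conic_def by simp

text \<open>At a singular point \<open>x\<close> of the fibre, Euler's identity for the forms \<open>f\<^sub>i\<^sub>j\<close> gives
  \<open>\<theta> \<partial>Q/\<partial>s + \<partial>Q/\<partial>t = \<Sum> (a\<^sub>i + a\<^sub>j + e) f\<^sub>i\<^sub>j(\<theta>,1) x\<^sub>i x\<^sub>j = 0\<close>, so the Jacobian criterion for
  the smoothness of \<open>X\<close> forces \<open>\<partial>Q/\<partial>s \<noteq> 0\<close>.\<close>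
lemma fibre_kernel_Q_ds_nonzero:
  assumes smooth: "smooth_X a1 a2 e c"
    and sym: "\<forall>i<3. \<forall>j<3. \<forall>k\<le>wdeg a1 a2 e i j. c i j k = c j i k"
    and x: "\<exists>i<3. x i \<noteq> 0" "in_kernel3 (fibre_conic a1 a2 e c \<theta>) x"
  shows "conic_val (\<lambda>i j. bf_ds (wdeg a1 a2 e i j) (c i j) \<theta> 1) x \<noteq> 0"
proof -
  let ?M = "fibre_conic a1 a2 e c \<theta>"
  have M_sym: "\<forall>i<3. \<forall>j<3. ?M i j = ?M j i"
    using fibre_conic_symmetric[OF sym] .
  have "\<theta> * Q_ds a1 a2 e c \<theta> 1 x + Q_dt a1 a2 e c \<theta> 1 x
      = (\<Sum>i<3. \<Sum>j<3. of_nat (wdeg a1 a2 e i j) * ?M i j * x i * x j)"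
    unfolding Q_ds_def Q_dt_def fibre_conic_def fij_def
    by (simp add: sum_distrib_left algebra_simps flip: sum.distrib bf_euler[where t = 1, simplified])
  also have "\<dots> = (\<Sum>i<3. \<Sum>j<3. (of_nat (aidx a1 a2 i) + of_nat (aidx a1 a2 j) + of_nat e)
                      * ?M i j * x i * x j)"
    unfolding wdeg_def by simp
  also have "\<dots> = 0"
    by (rule weighted_conic_val_kernel[OF M_sym x(2)])
  finally have euler: "\<theta> * Q_ds a1 a2 e c \<theta> 1 x + Q_dt a1 a2 e c \<theta> 1 x = 0" .
  have "Qform a1 a2 e c \<theta> 1 x = 0"
    using conic_val_kernel[OF x(2)] unfolding conic_val_def Qform_def fibre_conic_def .
  moreover have "\<forall>m<3. Q_dx a1 a2 e c \<theta> 1 x m = 0"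
    using x conic_sing_pt_iff_kernel[OF M_sym]
    unfolding conic_sing_pt_def Q_dx_def fibre_conic_def by blast
  ultimately have "Q_ds a1 a2 e c \<theta> 1 x \<noteq> 0 \<or> Q_dt a1 a2 e c \<theta> 1 x \<noteq> 0"
    using smooth x(1) unfolding smooth_X_def by auto
  then show ?thesis
    using euler unfolding Q_ds_def conic_val_def by auto
qed

lemma fibre_kernel_is_line:
  assumes smooth: "smooth_X a1 a2 e c"
    and sym: "\<forall>i<3. \<forall>j<3. \<forall>k\<le>wdeg a1 a2 e i j. c i j k = c j i k"
    and P: "\<exists>l<3. P l \<noteq> 0" "in_kernel3 (fibre_conic a1 a2 e c \<theta>) P"
    and w: "in_kernel3 (fibre_conic a1 a2 e c \<theta>) w"
  obtains t where "\<forall>r<3. w r = t * P r"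
proof (rule kernel_is_line[OF _ P w])
  show "\<forall>x. (\<exists>i<3. x i \<noteq> 0) \<and> in_kernel3 (fibre_conic a1 a2 e c \<theta>) x
          \<longrightarrow> conic_val (\<lambda>i j. bf_ds (wdeg a1 a2 e i j) (c i j) \<theta> 1) x \<noteq> 0"
    using fibre_kernel_Q_ds_nonzero[OF smooth sym] by blast
qed

lemma delta_p_at_eq_disc:
  assumes "sing_index (fibre_conic a1 a2 e c \<theta>) = i" "other_idx i = (j, k)"
  defines "M \<equiv> fibre_conic a1 a2 e c \<theta>"
  shows "delta_p_at a1 a2 e c \<theta> = (M j k + M k j)\<^sup>2 - 4 * M j j * M k k"
  using assms unfolding delta_p_at_def disc_restr_def fibre_conic_def by simp

theorem lemma4p6:
  fixes K :: "complex set" and a1 a2 e :: nat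
    and c :: "nat \<Rightarrow> nat \<Rightarrow> nat \<Rightarrow> complex" and \<theta> :: complex
  assumes "number_field K"
    and "\<forall>i<3. \<forall>j<3. \<forall>k\<le>wdeg a1 a2 e i j. c i j k \<in> ring_of_integers K"
    and "\<forall>i<3. \<forall>j<3. \<forall>k\<le>wdeg a1 a2 e i j. c i j k = c j i k"
    and "smooth_X a1 a2 e c"
    and "Delta a1 a2 e c 1 0 \<noteq> 0"
    and "Delta a1 a2 e c \<theta> 1 = 0"
  shows "delta_p_at a1 a2 e c \<theta> \<noteq> 0 \<and>
    (conic_split (gen_field K \<theta>) (fibre_conic a1 a2 e c \<theta>) \<longleftrightarrow>
       (\<exists>y\<in>gen_field K \<theta>. y ^ 2 = delta_p_at a1 a2 e c \<theta>))"
proof -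
  define L M i where "L = gen_field K \<theta>" and "M = fibre_conic a1 a2 e c \<theta>" and "i = sing_index M"
  have L: "is_subfield L"
    unfolding L_def by (rule gen_field_is_subfield)
  have sym: "\<forall>i<3. \<forall>j<3. M i j = M j i"
    unfolding M_def using fibre_conic_symmetric[OF assms(3)] .
  have entries: "\<forall>i<3. \<forall>j<3. M i j \<in> L"
    unfolding M_def L_def using assms(2)
    by (intro fibre_conic_in_gen_field) (auto simp: ring_of_integers_def)
  have "det3 M = 0"
    unfolding M_def using assms(6) by (rule det3_fibre_conic)
  then obtain P where P: "i < 3" "in_kernel3 M P" "P i = 1"
    using sing_index_kernel_vector[OF sym, folded i_def] by blast
  obtain j k where jk: "other_idx i = (j, k)"
    by (cases "other_idx i")
  have ijk: "perm3 i j k"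
    using P(1) jk by (rule perm3_other_idx)
  have "\<exists>l<3. P l \<noteq> 0"
    using P by auto
  then have line: "\<exists>t. \<forall>r<3. w r = t * P r" if "in_kernel3 M w" for w
    using fibre_kernel_is_line[OF assms(4,3)] P(2) that unfolding M_def by metis
  have disc: "(M j k + M k j)\<^sup>2 - 4 * M j j * M k k \<noteq> 0"
    using minor_disc_nonzero[OF sym P(2,3) ijk line] .
  moreover have "P j \<in> L" "P k \<in> L"
    using kernel_vector_in_subfield[OF L entries sym P(2,3) ijk disc] .
  moreover have "delta_p_at a1 a2 e c \<theta> = (M j k + M k j)\<^sup>2 - 4 * M j j * M k k"
    using delta_p_at_eq_disc i_def jk unfolding M_def by blast
  ultimately show ?thesis
    unfolding L_def[symmetric] M_def[symmetric]
    using singular_conic_split_iff[OF L entries sym P(2,3) _ _ ijk] by simp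
qed

end
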